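(* Let $(E,\mu)$ and $(F,\nu)$ be fuzzy Riesz spaces and let $T$ be a fuzzy Riesz homomorphism of $E$ onto $F$. The following are equivalent: (1) $T$ is a fuzzy Riesz $\sigma$-homomorphism; (2) for every fuzzy $\sigma$-ideal $A$ in $F$, the inverse image $T^{-1}(A)$ is a fuzzy $\sigma$-ideal in $E$; (3) the kernel $\mathrm{Ker}\,T=\{x\in E: Tx=0\}$ is a fuzzy $\sigma$-ideal in $E$.
   Context: A fuzzy order on a real vector space $E$ is a map $\mu:E\times E\to[0,1]$ with $\mu(x,x)=1$; $\mu(x,y)+\mu(y,x)>1$ implies $x=y$; and $\mu(x,z)\ge\sup_{y}\min(\mu(x,y),\mu(y,z))$. Write $x\le y$ for $\mu(x,y)>\frac12$; suprema/infima are taken with respect to this relation. $(E,\mu)$ is a fuzzy ordered linear space if $\mu(x_1,x_2)>\frac12$ implies $\mu(x_1,x_2)\le\mu(x_1+x,x_2+x)$ for all $x$ and $\mu(x_1,x_2)\le\mu(\alpha x_1,\alpha x_2)$ for all $\alpha>0$; it is a fuzzy Riesz space if $x\vee y=\sup\{x,y\}$ and $x\wedge y=\inf\{x,y\}$ exist for all $x,y$. $E^+=\{x:0\le x\}$, $A^+=A\cap E^+$, $|x|=x\vee(-x)$. $x_n\uparrow x$ means $x_n\le x_{n+1}$ for all $n$ and $x=\sup_n x_n$. A fuzzy ideal is a vector subspace $A$ such that $\mu(|x|,|y|)>\frac12$ and $y\in A$ imply $x\in A$; it is a fuzzy $\sigma$-ideal if $\{x_n\}\subseteq A^+$ and $x_n\uparrow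 x$ in $E$ imply $x\in A$. A fuzzy Riesz homomorphism is a linear map with $T(x\vee y)=Tx\vee Ty$; it is a fuzzy Riesz $\sigma$-homomorphism if $x=\sup_n x_n$ ($n=1,2,\dots$) in $E$ implies $Tx=\sup_n Tx_n$ in $F$. *)

theory Defs
  imports "HOL-Analysis.Analysis"
begin

text \<open>The transitivity condition mu x z >= sup_y min (mu x y) (mu y z) is written as the
  (equivalent, literal) pointwise bound.\<close>
definition fuzzy_order :: "('a \<Rightarrow> 'a \<Rightarrow> real) \<Rightarrow> bool" where
  "fuzzy_order \<mu> \<longleftrightarrow>
     (\<forall>x y. 0 \<le> \<mu> x y \<and> \<mu> x y \<le> 1) \<and>
     (\<forall>x. \<mu> x x = 1) \<and>
     (\<forall>x y. \<mu> x y + \<mu> y x > 1 \<longrightarrow> x = y) \<and>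
     (\<forall>x z. (\<forall>y. min (\<mu> x y) (\<mu> y z) \<le> \<mu> x z))"

definition fle :: "('a \<Rightarrow> 'a \<Rightarrow> real) \<Rightarrow> 'a \<Rightarrow> 'a \<Rightarrow> bool" where
  "fle \<mu> x y \<longleftrightarrow> \<mu> x y > 1/2"

definition is_fsup :: "('a \<Rightarrow> 'a \<Rightarrow> real) \<Rightarrow> 'a set \<Rightarrow> 'a \<Rightarrow> bool" where
  "is_fsup \<mu> S s \<longleftrightarrow> (\<forall>x\<in>S. fle \<mu> x s) \<and> (\<forall>u. (\<forall>x\<in>S. fle \<mu> x u) \<longrightarrow> fle \<mu> s u)"

definition is_finf :: "('a \<Rightarrow> 'a \<Rightarrow> real) \<Rightarrow> 'a set \<Rightarrow> 'a \<Rightarrow> bool" where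
  "is_finf \<mu> S s \<longleftrightarrow> (\<forall>x\<in>S. fle \<mu> s x) \<and> (\<forall>u. (\<forall>x\<in>S. fle \<mu> u x) \<longrightarrow> fle \<mu> u s)"

definition fuzzy_ordered_linear_space :: "('a::real_vector \<Rightarrow> 'a \<Rightarrow> real) \<Rightarrow> bool" where
  "fuzzy_ordered_linear_space \<mu> \<longleftrightarrow> fuzzy_order \<mu> \<and>
     (\<forall>x1 x2. \<mu> x1 x2 > 1/2 \<longrightarrow>
        (\<forall>x. \<mu> x1 x2 \<le> \<mu> (x1 + x) (x2 + x)) \<and>
        (\<forall>\<alpha>::real. \<alpha> > 0 \<longrightarrow> \<mu> x1 x2 \<le> \<mu> (\<alpha> *\<^sub>R x1) (\<alpha> *\<^sub>R x2)))"

definition fuzzy_riesz_space :: "('a::real_vector \<Rightarrow> 'a \<Rightarrow> real) \<Rightarrow> bool" where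
  "fuzzy_riesz_space \<mu> \<longleftrightarrow> fuzzy_ordered_linear_space \<mu> \<and>
     (\<forall>x y. (\<exists>s. is_fsup \<mu> {x, y} s) \<and> (\<exists>i. is_finf \<mu> {x, y} i))"

text \<open>x join y (the supremum is unique by antisymmetry of the fuzzy order).\<close>
definition fjoin :: "('a \<Rightarrow> 'a \<Rightarrow> real) \<Rightarrow> 'a \<Rightarrow> 'a \<Rightarrow> 'a" where
  "fjoin \<mu> x y = (THE s. is_fsup \<mu> {x, y} s)"

definition fabs :: "('a::real_vector \<Rightarrow> 'a \<Rightarrow> real) \<Rightarrow> 'a \<Rightarrow> 'a" where
  "fabs \<mu> x = fjoin \<mu> x (- x)"

definition fuzzy_ideal :: "('a::real_vector \<Rightarrow> 'a \<Rightarrow> real) \<Rightarrow> 'a set \<Rightarrow> bool" where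
  "fuzzy_ideal \<mu> A \<longleftrightarrow> subspace A \<and>
     (\<forall>x y. fle \<mu> (fabs \<mu> x) (fabs \<mu> y) \<and> y \<in> A \<longrightarrow> x \<in> A)"

definition fuzzy_sigma_ideal :: "('a::real_vector \<Rightarrow> 'a \<Rightarrow> real) \<Rightarrow> 'a set \<Rightarrow> bool" where
  "fuzzy_sigma_ideal \<mu> A \<longleftrightarrow> fuzzy_ideal \<mu> A \<and>
     (\<forall>(X::nat \<Rightarrow> 'a) x. (\<forall>n. X n \<in> A \<and> fle \<mu> 0 (X n)) \<and>
        (\<forall>n. fle \<mu> (X n) (X (Suc n))) \<and> is_fsup \<mu> (range X) x \<longrightarrow> x \<in> A)"

definition fuzzy_riesz_hom ::
  "('a::real_vector \<Rightarrow> 'a \<Rightarrow> real) \<Rightarrow> ('b::real_vector \<Rightarrow> 'b \<Rightarrow> real) \<Rightarrow> ('a \<Rightarrow> 'b) \<Rightarrow> bool" where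
  "fuzzy_riesz_hom \<mu> \<nu> T \<longleftrightarrow> linear T \<and>
     (\<forall>x y. T (fjoin \<mu> x y) = fjoin \<nu> (T x) (T y))"

definition fuzzy_riesz_sigma_hom ::
  "('a::real_vector \<Rightarrow> 'a \<Rightarrow> real) \<Rightarrow> ('b::real_vector \<Rightarrow> 'b \<Rightarrow> real) \<Rightarrow> ('a \<Rightarrow> 'b) \<Rightarrow> bool" where
  "fuzzy_riesz_sigma_hom \<mu> \<nu> T \<longleftrightarrow> fuzzy_riesz_hom \<mu> \<nu> T \<and>
     (\<forall>(X::nat \<Rightarrow> 'a) x. is_fsup \<mu> (range X) x \<longrightarrow> is_fsup \<nu> (range (\<lambda>n. T (X n))) (T x))"

end

theory Submission
  imports Defs
begin

text \<open>A Riesz homomorphism is monotone and commutes with absolute values, so a \<sigma>-homomorphism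
  pulls \<sigma>-ideals back to \<sigma>-ideals; and \<open>{0}\<close> is a \<sigma>-ideal, whose preimage is the kernel.
  Conversely, let \<open>x = sup x\<^sub>n\<close> and let \<open>T y\<close> be an upper bound of the \<open>T x\<^sub>n\<close>.
  The partial joins \<open>w\<^sub>n = (x\<^sub>0 - y)\<^sup>+ \<or> \<dots> \<or> (x\<^sub>n - y)\<^sup>+\<close> are positive, increase to
  \<open>(x - y)\<^sup>+\<close> and lie in the kernel, since \<open>T ((x\<^sub>k - y)\<^sup>+) = (T x\<^sub>k - T y)\<^sup>+ = 0\<close>.
  If the kernel is a \<sigma>-ideal, then \<open>(T x - T y)\<^sup>+ = T ((x - y)\<^sup>+) = 0\<close>, i.e. \<open>T x \<le> T y\<close>.\<close>

lemma fuzzy_sigma_idealD: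
  assumes "fuzzy_sigma_ideal \<mu> A" "\<And>n. X n \<in> A" "\<And>n. fle \<mu> 0 (X n)"
    "\<And>n. fle \<mu> (X n) (X (Suc n))" "is_fsup \<mu> (range X) x"
  shows "x \<in> A"
  using assms unfolding fuzzy_sigma_ideal_def by blast

locale fuzzy_riesz =
  fixes \<mu> :: "'a::real_vector \<Rightarrow> 'a \<Rightarrow> real"
  assumes riesz: "fuzzy_riesz_space \<mu>"
begin

lemma fuzzy_order: "fuzzy_order \<mu>"
  using riesz by (simp add: fuzzy_riesz_space_def fuzzy_ordered_linear_space_def)

lemma fle_refl: "fle \<mu> x x"
  using fuzzy_order by (simp add: fuzzy_order_def fle_def)

lemma fle_antisym: "fle \<mu> x y \<Longrightarrow> fle \<mu> y x \<Longrightarrow> x = y"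
  using fuzzy_order unfolding fuzzy_order_def fle_def by force

lemma fle_trans: "fle \<mu> x y \<Longrightarrow> fle \<mu> y z \<Longrightarrow> fle \<mu> x z"
proof -
  assume "fle \<mu> x y" "fle \<mu> y z"
  moreover have "min (\<mu> x y) (\<mu> y z) \<le> \<mu> x z"
    using fuzzy_order unfolding fuzzy_order_def by blast
  ultimately show ?thesis
    unfolding fle_def by linarith
qed

lemma fle_add_right: "fle \<mu> x y \<Longrightarrow> fle \<mu> (x + z) (y + z)"
  using riesz unfolding fuzzy_riesz_space_def fuzzy_ordered_linear_space_def fle_def
  by (meson less_le_trans)

lemma fle_add_right_iff: "fle \<mu> (x + z) (y + z) \<longleftrightarrow> fle \<mu> x y"
  using fle_add_right[of "x + z" "y + z" "- z"] fle_add_right[of x y z] by auto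

lemma fle_diff_0_iff: "fle \<mu> (x - y) 0 \<longleftrightarrow> fle \<mu> x y"
  using fle_add_right_iff[of "x - y" y 0] by simp

lemma is_fsup_unique: "is_fsup \<mu> S a \<Longrightarrow> is_fsup \<mu> S b \<Longrightarrow> a = b"
  unfolding is_fsup_def by (meson fle_antisym)

lemma is_fsup_fjoin: "is_fsup \<mu> {x, y} (fjoin \<mu> x y)"
proof -
  obtain s where s: "is_fsup \<mu> {x, y} s"
    using riesz unfolding fuzzy_riesz_space_def by blast
  then have "fjoin \<mu> x y = s"
    unfolding fjoin_def using is_fsup_unique by blast
  with s show ?thesis
    by simp
qed

lemma fjoin_upper1: "fle \<mu> x (fjoin \<mu> x y)"
  and fjoin_upper2: "fle \<mu> y (fjoin \<mu> x y)"
  and fjoin_least: "fle \<mu> x u \<Longrightarrow> fle \<mu> y u \<Longrightarrow> fle \<mu> (fjoin \<mu> x y) u"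
  using is_fsup_fjoin[of x y] unfolding is_fsup_def by blast+

lemma fjoin_le_iff: "fle \<mu> (fjoin \<mu> x y) u \<longleftrightarrow> fle \<mu> x u \<and> fle \<mu> y u"
  by (meson fjoin_least fjoin_upper1 fjoin_upper2 fle_trans)

lemma fle_iff_fjoin_eq: "fle \<mu> x y \<longleftrightarrow> fjoin \<mu> x y = y"
  by (metis fle_antisym fjoin_least fle_refl fjoin_upper1 fjoin_upper2)

lemma fle_iff_pos_part_diff_eq_0: "fle \<mu> x y \<longleftrightarrow> fjoin \<mu> (x - y) 0 = 0"
  using fle_diff_0_iff fle_iff_fjoin_eq by blast

lemma fabs_0: "fabs \<mu> 0 = 0"
  unfolding fabs_def using fle_iff_fjoin_eq fle_refl by simp

lemma fabs_le_0_imp_eq_0: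
  assumes "fle \<mu> (fabs \<mu> x) 0"
  shows "x = 0"
proof -
  have "fle \<mu> x 0" "fle \<mu> (- x) 0"
    using assms unfolding fabs_def fjoin_le_iff by auto
  moreover have "fle \<mu> 0 x"
    using \<open>fle \<mu> (- x) 0\<close> fle_add_right[of "- x" 0 x] by simp
  ultimately show ?thesis
    using fle_antisym by blast
qed

lemma fuzzy_sigma_ideal_0: "fuzzy_sigma_ideal \<mu> {0}"
proof -
  have "x = 0" if "fle \<mu> (fabs \<mu> x) (fabs \<mu> 0)" for x
    using that fabs_0 fabs_le_0_imp_eq_0 by simp
  moreover have "x = 0" if "range X \<subseteq> {0}" "is_fsup \<mu> (range X) x" for X :: "nat \<Rightarrow> 'a" and x
  proof -
    have "range X = {0}"
      using that(1) by (simp add: subset_singleton_iff)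
    moreover have "is_fsup \<mu> {0} 0"
      unfolding is_fsup_def using fle_refl by simp
    ultimately show ?thesis
      using that(2) is_fsup_unique by simp
  qed
  ultimately show ?thesis
    unfolding fuzzy_sigma_ideal_def fuzzy_ideal_def using subspace_single_0 by blast
qed

lemma is_fsup_add_const:
  assumes sup: "is_fsup \<mu> (range X) x"
  shows "is_fsup \<mu> (range (\<lambda>n. X n + z)) (x + z)"
proof -
  have "fle \<mu> (X n + z) (x + z)" for n
    using sup fle_add_right unfolding is_fsup_def by blast
  moreover have "fle \<mu> (x + z) u" if "\<forall>n. fle \<mu> (X n + z) u" for u
  proof -
    have "fle \<mu> (X n) (u - z)" for n
      using that fle_add_right_iff[of "X n" z "u - z"] by simp
    then have "fle \<mu> x (u - z)"
      using sup unfolding is_fsup_def by blast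
    then show ?thesis
      using fle_add_right[of x "u - z" z] by simp
  qed
  ultimately show ?thesis
    unfolding is_fsup_def by blast
qed

lemma is_fsup_fjoin_const:
  assumes sup: "is_fsup \<mu> (range X) x"
  shows "is_fsup \<mu> (range (\<lambda>n. fjoin \<mu> (X n) c)) (fjoin \<mu> x c)"
proof -
  have "fle \<mu> (fjoin \<mu> (X n) c) (fjoin \<mu> x c)" for n
  proof -
    have "fle \<mu> (X n) x"
      using sup unfolding is_fsup_def by blast
    then show ?thesis
      using fjoin_le_iff fjoin_upper1 fjoin_upper2 fle_trans by blast
  qed
  moreover have "fle \<mu> (fjoin \<mu> x c) u" if "\<forall>n. fle \<mu> (fjoin \<mu> (X n) c) u" for u
  proof -
    have "\<forall>n. fle \<mu> (X n) u" and "fle \<mu> c u"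
      using that unfolding fjoin_le_iff by blast+
    then show ?thesis
      using sup fjoin_least unfolding is_fsup_def by blast
  qed
  ultimately show ?thesis
    unfolding is_fsup_def by blast
qed

primrec partial_fjoin :: "(nat \<Rightarrow> 'a) \<Rightarrow> nat \<Rightarrow> 'a" where
  "partial_fjoin P 0 = P 0"
| "partial_fjoin P (Suc n) = fjoin \<mu> (partial_fjoin P n) (P (Suc n))"

lemma partial_fjoin_le_iff: "fle \<mu> (partial_fjoin P n) u \<longleftrightarrow> (\<forall>k\<le>n. fle \<mu> (P k) u)"
  by (induction n) (auto simp: fjoin_le_iff le_Suc_eq)

lemma partial_fjoin_upper: "k \<le> n \<Longrightarrow> fle \<mu> (P k) (partial_fjoin P n)"
  using partial_fjoin_le_iff fle_refl by blast

lemma partial_fjoin_Suc_upper: "fle \<mu> (partial_fjoin P n) (partial_fjoin P (Suc n))"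
  by (simp add: fjoin_upper1)

lemma is_fsup_partial_fjoin_iff: "is_fsup \<mu> (range (partial_fjoin P)) s \<longleftrightarrow> is_fsup \<mu> (range P) s"
proof -
  have "(\<forall>n. fle \<mu> (partial_fjoin P n) u) \<longleftrightarrow> (\<forall>n. fle \<mu> (P n) u)" for u
    unfolding partial_fjoin_le_iff by auto
  then show ?thesis
    unfolding is_fsup_def by simp
qed

end

locale fuzzy_riesz_homomorphism = E: fuzzy_riesz \<mu> + F: fuzzy_riesz \<nu>
  for \<mu> :: "'a::real_vector \<Rightarrow> 'a \<Rightarrow> real" and \<nu> :: "'b::real_vector \<Rightarrow> 'b \<Rightarrow> real" +
  fixes T :: "'a \<Rightarrow> 'b"
  assumes hom: "fuzzy_riesz_hom \<mu> \<nu> T"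
begin

lemma linear: "linear T"
  using hom by (simp add: fuzzy_riesz_hom_def)

lemma fjoin: "T (fjoin \<mu> x y) = fjoin \<nu> (T x) (T y)"
  using hom by (simp add: fuzzy_riesz_hom_def)

lemma fle: "fle \<mu> x y \<Longrightarrow> fle \<nu> (T x) (T y)"
  by (metis E.fle_iff_fjoin_eq F.fle_iff_fjoin_eq fjoin)

lemma fabs: "T (fabs \<mu> x) = fabs \<nu> (T x)"
  unfolding fabs_def by (simp add: fjoin linear linear_neg)

lemma pos_part_diff: "T (fjoin \<mu> (x - y) 0) = fjoin \<nu> (T x - T y) 0"
  by (simp add: fjoin linear linear_0 linear_diff)

lemma partial_fjoin_in_kernel:
  assumes "\<And>k. T (P k) = 0"
  shows "T (E.partial_fjoin P n) = 0"
  by (induction n) (simp_all add: assms fjoin F.fle_iff_fjoin_eq[symmetric] F.fle_refl)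

lemma fuzzy_ideal_vimage:
  assumes "fuzzy_ideal \<nu> A"
  shows "fuzzy_ideal \<mu> (T -` A)"
proof -
  have "T x \<in> A" if "fle \<mu> (fabs \<mu> x) (fabs \<mu> y)" "T y \<in> A" for x y
    using that assms fle[OF that(1)] unfolding fabs fuzzy_ideal_def by blast
  moreover have "subspace (T -` A)"
    using assms linear linear_subspace_vimage unfolding fuzzy_ideal_def by blast
  ultimately show ?thesis
    unfolding fuzzy_ideal_def by blast
qed

lemma fuzzy_sigma_ideal_vimage:
  assumes sigma_hom: "fuzzy_riesz_sigma_hom \<mu> \<nu> T" and A: "fuzzy_sigma_ideal \<nu> A"
  shows "fuzzy_sigma_ideal \<mu> (T -` A)"
proof -
  have "T x \<in> A"
    if "\<forall>n. T (X n) \<in> A \<and> fle \<mu> 0 (X n)" "\<forall>n. fle \<mu> (X n) (X (Suc n))"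
      "is_fsup \<mu> (range X) x" for X :: "nat \<Rightarrow> 'a" and x
  proof (rule fuzzy_sigma_idealD[OF A])
    show "T (X n) \<in> A" for n
      using that(1) by blast
    show "fle \<nu> 0 (T (X n))" for n
      using that(1) fle[of 0] linear linear_0 by fastforce
    show "fle \<nu> (T (X n)) (T (X (Suc n)))" for n
      using that(2) fle by blast
    show "is_fsup \<nu> (range (\<lambda>n. T (X n))) (T x)"
      using sigma_hom that(3) unfolding fuzzy_riesz_sigma_hom_def by blast
  qed
  then show ?thesis
    using A fuzzy_ideal_vimage unfolding fuzzy_sigma_ideal_def by auto
qed

lemma fuzzy_sigma_ideal_kernel_if_vimage:
  assumes "\<forall>A. fuzzy_sigma_ideal \<nu> A \<longrightarrow> fuzzy_sigma_ideal \<mu> (T -` A)"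
  shows "fuzzy_sigma_ideal \<mu> {x. T x = 0}"
proof -
  have "fuzzy_sigma_ideal \<mu> (T -` {0})"
    using assms F.fuzzy_sigma_ideal_0 by blast
  moreover have "T -` {0} = {x. T x = 0}"
    by auto
  ultimately show ?thesis
    by simp
qed

lemma fle_if_kernel_sigma_ideal:
  fixes X :: "nat \<Rightarrow> 'a"
  assumes kernel: "fuzzy_sigma_ideal \<mu> {x. T x = 0}"
    and sup: "is_fsup \<mu> (range X) x"
    and upper: "\<And>n. fle \<nu> (T (X n)) (T y)"
  shows "fle \<nu> (T x) (T y)"
proof -
  define P where "P n = fjoin \<mu> (X n - y) 0" for n
  define W where "W = E.partial_fjoin P"
  have "T (P n) = 0" for n
    unfolding P_def pos_part_diff using upper F.fle_iff_pos_part_diff_eq_0 by blast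
  then have "T (W n) = 0" for n
    unfolding W_def by (rule partial_fjoin_in_kernel)
  moreover have "fle \<mu> 0 (W n)" for n
  proof -
    have "fle \<mu> 0 (P n)"
      unfolding P_def by (rule E.fjoin_upper2)
    then show ?thesis
      using E.partial_fjoin_upper[of n n P] E.fle_trans unfolding W_def by blast
  qed
  moreover have "fle \<mu> (W n) (W (Suc n))" for n
    unfolding W_def by (rule E.partial_fjoin_Suc_upper)
  moreover have "is_fsup \<mu> (range W) (fjoin \<mu> (x - y) 0)"
    unfolding W_def E.is_fsup_partial_fjoin_iff P_def
    using E.is_fsup_fjoin_const[OF E.is_fsup_add_const[OF sup, of "- y"]] by simp
  ultimately have "T (fjoin \<mu> (x - y) 0) = 0"
    using fuzzy_sigma_idealD[OF kernel, of W] by blast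
  then show ?thesis
    unfolding pos_part_diff F.fle_iff_pos_part_diff_eq_0 .
qed

lemma fuzzy_riesz_sigma_hom_if_kernel:
  assumes "surj T" and kernel: "fuzzy_sigma_ideal \<mu> {x. T x = 0}"
  shows "fuzzy_riesz_sigma_hom \<mu> \<nu> T"
proof -
  have "is_fsup \<nu> (range (\<lambda>n. T (X n))) (T x)"
    if sup: "is_fsup \<mu> (range X) x" for X :: "nat \<Rightarrow> 'a" and x
  proof -
    have "fle \<nu> (T (X n)) (T x)" for n
      using sup fle unfolding is_fsup_def by blast
    moreover have "fle \<nu> (T x) u" if "\<forall>n. fle \<nu> (T (X n)) u" for u
      using that \<open>surj T\<close> fle_if_kernel_sigma_ideal[OF kernel sup] by (metis surjD)
    ultimately show ?thesis
      unfolding is_fsup_def by blast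
  qed
  then show ?thesis
    using hom unfolding fuzzy_riesz_sigma_hom_def by blast
qed

end

theorem theorem2p10:
  fixes \<mu> :: "'a::real_vector \<Rightarrow> 'a \<Rightarrow> real"
    and \<nu> :: "'b::real_vector \<Rightarrow> 'b \<Rightarrow> real"
    and T :: "'a \<Rightarrow> 'b"
  assumes "fuzzy_riesz_space \<mu>"
    and "fuzzy_riesz_space \<nu>"
    and "fuzzy_riesz_hom \<mu> \<nu> T"
    and "surj T"
  shows "(fuzzy_riesz_sigma_hom \<mu> \<nu> T \<longrightarrow> (\<forall>A. fuzzy_sigma_ideal \<nu> A \<longrightarrow> fuzzy_sigma_ideal \<mu> (T -` A)))
       \<and> ((\<forall>A. fuzzy_sigma_ideal \<nu> A \<longrightarrow> fuzzy_sigma_ideal \<mu> (T -` A)) \<longrightarrow> fuzzy_sigma_ideal \<mu> {x. T x = 0})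
       \<and> (fuzzy_sigma_ideal \<mu> {x. T x = 0} \<longrightarrow> fuzzy_riesz_sigma_hom \<mu> \<nu> T)"
proof -
  interpret fuzzy_riesz_homomorphism \<mu> \<nu> T
    using assms(1-3) by unfold_locales
  show ?thesis
    using fuzzy_sigma_ideal_vimage fuzzy_sigma_ideal_kernel_if_vimage
      fuzzy_riesz_sigma_hom_if_kernel[OF assms(4)] by blast
qed

end
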